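(* Let $\Gamma$ be a connected $(Y,Y')$-bipartite graph that is distance-semiregular with respect to $Y$, with intersection numbers $b_i,c_i$ ($0\le i\le4$), and assume every vertex of $Y$ has eccentricity $4$. Let $b'_0$ denote the valency of the vertices of $Y'$. Then $\Gamma$ is the incidence graph of a $(v,b,r,k,\lambda_1,0)$ SPBIBD of type $(b_1,c_3)$ with point set $Y$ and block set $Y'$ (incidence = adjacency), where $$v=1+\frac{b_0b_1}{c_2}+\frac{b_0b_1b_2b_3}{c_2c_3c_4},\quad b=b_0+\frac{b_0b_1b_2}{c_2c_3},\quad r=b_0,\quad k=b'_0,\quad \lambda_1=c_2.$$
   Context: For a connected graph, $\Gamma_i(u)$ is the set of vertices at distance $i$ from $u$, $\Gamma(u)=\Gamma_1(u)$, $\varepsilon(u)$ the eccentricity. For $w\in\Gamma_i(u)$, $b_i(u,w)=|\Gamma_{i+1}(u)\cap\Gamma(w)|$, $c_i(u,w)=|\Gamma_{i-1}(u)\cap\Gamma(w)|$. A graph is $(Y,Y')$-bipartite if its vertex set is $Y\sqcup Y'$ with every edge joining $Y$ to $Y'$. A connected $(Y,Y')$-bipartite graph is distance-semiregular with respect to $Y$ if there are constants $b_i,c_i$ with $b_i(x,w)=b_i$ and $c_i(x,w)=c_i$ for all $x\in Y$, $0\le i\le\varepsilon(x)$, $w\in\Gamma_i(x)$; then vertices of $Y$ have valency $b_0$ and vertices of $Y'$ have valency $b_1+1$. A design $\mathcal{D}=(\mathcal{P},\mathcal{B},\mathcal{I})$ is an incidence structure with $|\mathcal{P}|=v$, $|\mathcal{B}|=b$,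 every block incident with exactly $k$ points and every point with exactly $r$ blocks. $(p,B)$ is a flag if $p\in B$, a non-flag otherwise. $\mathcal{D}$ is a $(v,b,r,k,\lambda_1,\lambda_2)$ SPBIBD of type $(s,t)$ if (i) any two distinct points are together in exactly $\lambda_1$ or exactly $\lambda_2$ blocks; (ii) for every flag $(p,B)$, the number of points of $B$ other than $p$ lying with $p$ in exactly $\lambda_1$ blocks is $s$; (iii) for every non-flag $(p,B)$, the number of points of $B$ lying with $p$ in exactly $\lambda_1$ blocks is $t$. The incidence graph is the bipartite graph on $\mathcal{P}\cup\mathcal{B}$ with $p\sim B$ iff $p\in B$. *)

theory Defs
  imports Complex_Main
begin

definition graph :: "'a set \<Rightarrow> ('a \<Rightarrow> 'a \<Rightarrow> bool) \<Rightarrow> bool" where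
  "graph V E \<longleftrightarrow> finite V \<and> (\<forall>x y. E x y \<longrightarrow> x \<in> V \<and> y \<in> V \<and> E y x \<and> x \<noteq> y)"

inductive walk :: "('a \<Rightarrow> 'a \<Rightarrow> bool) \<Rightarrow> 'a \<Rightarrow> 'a \<Rightarrow> nat \<Rightarrow> bool" for E where
  walk_nil: "walk E u u 0"
| walk_cons: "E u x \<Longrightarrow> walk E x w n \<Longrightarrow> walk E u w (Suc n)"

definition connected_graph :: "'a set \<Rightarrow> ('a \<Rightarrow> 'a \<Rightarrow> bool) \<Rightarrow> bool" where
  "connected_graph V E \<longleftrightarrow> graph V E \<and> V \<noteq> {} \<and> (\<forall>u\<in>V. \<forall>w\<in>V. \<exists>n. walk E u w n)"

definition dist :: "('a \<Rightarrow> 'a \<Rightarrow> bool) \<Rightarrow> 'a \<Rightarrow> 'a \<Rightarrow> nat" where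
  "dist E u w = (LEAST n. walk E u w n)"

definition nbhd :: "'a set \<Rightarrow> ('a \<Rightarrow> 'a \<Rightarrow> bool) \<Rightarrow> 'a \<Rightarrow> 'a set" where
  "nbhd V E u = {w \<in> V. E u w}"

definition sphere :: "'a set \<Rightarrow> ('a \<Rightarrow> 'a \<Rightarrow> bool) \<Rightarrow> 'a \<Rightarrow> nat \<Rightarrow> 'a set" where
  "sphere V E u i = {w \<in> V. dist E u w = i}"

definition ecc :: "'a set \<Rightarrow> ('a \<Rightarrow> 'a \<Rightarrow> bool) \<Rightarrow> 'a \<Rightarrow> nat" where
  "ecc V E u = Max (dist E u ` V)"

definition b_num :: "'a set \<Rightarrow> ('a \<Rightarrow> 'a \<Rightarrow> bool) \<Rightarrow> nat \<Rightarrow> 'a \<Rightarrow> 'a \<Rightarrow> nat" where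
  "b_num V E i u w = card (sphere V E u (i + 1) \<inter> nbhd V E w)"

text \<open>For i = 0 the set \<Gamma>_{-1}(u) is empty; we make this explicit.\<close>
definition c_num :: "'a set \<Rightarrow> ('a \<Rightarrow> 'a \<Rightarrow> bool) \<Rightarrow> nat \<Rightarrow> 'a \<Rightarrow> 'a \<Rightarrow> nat" where
  "c_num V E i u w = (if i = 0 then 0 else card (sphere V E u (i - 1) \<inter> nbhd V E w))"

definition bipartite :: "'a set \<Rightarrow> ('a \<Rightarrow> 'a \<Rightarrow> bool) \<Rightarrow> 'a set \<Rightarrow> 'a set \<Rightarrow> bool" where
  "bipartite V E Y Y' \<longleftrightarrow> V = Y \<union> Y' \<and> Y \<inter> Y' = {} \<and>
     (\<forall>x y. E x y \<longrightarrow> (x \<in> Y \<and> y \<in> Y') \<or> (x \<in> Y' \<and> y \<in> Y))"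

definition distance_semiregular ::
  "'a set \<Rightarrow> ('a \<Rightarrow> 'a \<Rightarrow> bool) \<Rightarrow> 'a set \<Rightarrow> 'a set \<Rightarrow> (nat \<Rightarrow> nat) \<Rightarrow> (nat \<Rightarrow> nat) \<Rightarrow> bool" where
  "distance_semiregular V E Y Y' b c \<longleftrightarrow> connected_graph V E \<and> bipartite V E Y Y' \<and>
     (\<forall>x\<in>Y. \<forall>i \<le> ecc V E x. \<forall>w\<in>sphere V E x i.
        b_num V E i x w = b i \<and> c_num V E i x w = c i)"

definition design :: "'a set \<Rightarrow> 'a set \<Rightarrow> ('a \<Rightarrow> 'a \<Rightarrow> bool) \<Rightarrow> nat \<Rightarrow> nat \<Rightarrow> nat \<Rightarrow> nat \<Rightarrow> bool" where
  "design P Bs I v bb r k \<longleftrightarrow> finite P \<and> finite Bs \<and> card P = v \<and> card Bs = bb \<and>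
     (\<forall>B\<in>Bs. card {p \<in> P. I p B} = k) \<and> (\<forall>p\<in>P. card {B \<in> Bs. I p B} = r)"

definition lam :: "'a set \<Rightarrow> ('a \<Rightarrow> 'a \<Rightarrow> bool) \<Rightarrow> 'a \<Rightarrow> 'a \<Rightarrow> nat" where
  "lam Bs I p q = card {B \<in> Bs. I p B \<and> I q B}"

definition SPBIBD :: "'a set \<Rightarrow> 'a set \<Rightarrow> ('a \<Rightarrow> 'a \<Rightarrow> bool) \<Rightarrow> nat \<Rightarrow> nat \<Rightarrow> nat \<Rightarrow> nat
    \<Rightarrow> nat \<Rightarrow> nat \<Rightarrow> nat \<Rightarrow> nat \<Rightarrow> bool" where
  "SPBIBD P Bs I v bb r k l1 l2 s t \<longleftrightarrow> design P Bs I v bb r k \<and>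
     (\<forall>p\<in>P. \<forall>q\<in>P. p \<noteq> q \<longrightarrow> lam Bs I p q = l1 \<or> lam Bs I p q = l2) \<and>
     (\<forall>p\<in>P. \<forall>B\<in>Bs. I p B \<longrightarrow> card {q \<in> P. q \<noteq> p \<and> I q B \<and> lam Bs I p q = l1} = s) \<and>
     (\<forall>p\<in>P. \<forall>B\<in>Bs. \<not> I p B \<longrightarrow> card {q \<in> P. I q B \<and> lam Bs I p q = l1} = t)"

end

theory Submission
  imports Defs
begin

(* Fix a point x. Since every point has eccentricity 4, the points are the vertices at even distance
   0, 2, 4 from x and the blocks those at odd distance 1, 3; counting the edges between consecutive
   spheres gives |\<Gamma>_i(x)| c_i = |\<Gamma>_(i-1)(x)| b_(i-1), hence v and b. Two distinct points have a
   common block iff they are at distance 2, and then they have exactly c_2 of them; so for a point p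
   and a block B the points of B with \<lambda> = c_2 are those of \<Gamma>_2(p) \<inter> \<Gamma>(B), of which there are
   b_1 if p is on B (distance 1) and c_3 otherwise (distance 3). *)

lemma card_mult_eq_by_double_counting:
  assumes "finite A" "finite B"
    and "\<forall>a\<in>A. card {b\<in>B. R a b} = m" and "\<forall>b\<in>B. card {a\<in>A. R a b} = n"
  shows "card A * m = card B * n"
proof -
  have "card A * m = (\<Sum>a\<in>A. card {b\<in>B. R a b})" using assms(3) by simp
  also have "\<dots> = (\<Sum>a\<in>A. \<Sum>b\<in>B. of_bool (R a b))"
    using assms(2) by (simp add: Collect_conj_eq Int_commute)
  also have "\<dots> = (\<Sum>b\<in>B. \<Sum>a\<in>A. of_bool (R a b))" by (rule sum.swap)
  also have "\<dots> = (\<Sum>b\<in>B. card {a\<in>A. R a b})"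
    using assms(1) by (simp add: Collect_conj_eq Int_commute)
  also have "\<dots> = card B * n" using assms(4) by simp
  finally show ?thesis .
qed

lemma even_le_4_cases: "even (n::nat) \<Longrightarrow> n \<le> 4 \<Longrightarrow> n \<in> {0, 2, 4}"
  by (auto elim!: evenE)

lemma odd_le_4_cases: "odd (n::nat) \<Longrightarrow> n \<le> 4 \<Longrightarrow> n \<in> {1, 3}"
  by (auto elim!: oddE)

subsection \<open>Walks and distance\<close>

inductive_cases walk_0E: "walk E u w 0"
inductive_cases walk_SucE: "walk E u w (Suc n)"

lemma walk_0_iff: "walk E u w 0 \<longleftrightarrow> u = w"
  by (auto elim: walk_0E intro: walk.intros)

lemma walk_snoc: "walk E u w n \<Longrightarrow> E w x \<Longrightarrow> walk E u x (Suc n)"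
  by (induction rule: walk.induct) (auto intro: walk.intros)

lemma walk_Suc_last: "walk E u w (Suc n) \<Longrightarrow> \<exists>y. walk E u y n \<and> E y w"
proof (induction n arbitrary: u)
  case 0
  then show ?case by (auto elim: walk_SucE simp: walk_0_iff intro: walk.intros)
next
  case (Suc n)
  then obtain x where "E u x" "walk E x w (Suc n)" by (auto elim: walk_SucE)
  moreover obtain y where "walk E x y n" "E y w" using Suc.IH[OF calculation(2)] by blast
  ultimately show ?case by (blast intro: walk_cons)
qed

lemma walk_1_iff: "walk E u w (Suc 0) \<longleftrightarrow> E u w"
  using walk_Suc_last[of E u w 0] by (auto simp: walk_0_iff intro: walk.intros)

lemma walk_bipartite_parity:
  assumes "bipartite V E Y Y'"
  shows "walk E u w n \<Longrightarrow> w \<in> Y \<longleftrightarrow> (u \<in> Y \<longleftrightarrow> even n)"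
proof (induction rule: walk.induct)
  case (walk_cons u x w n)
  have "u \<in> Y \<longleftrightarrow> x \<notin> Y" using walk_cons.hyps(1) assms by (auto simp: bipartite_def)
  with walk_cons.IH show ?case by auto
qed simp

lemma dist_le_walk: "walk E u w n \<Longrightarrow> dist E u w \<le> n"
  unfolding dist_def by (rule Least_le)

lemma dist_le_2_if_common_neighbour: "E p B \<Longrightarrow> E B q \<Longrightarrow> dist E p q \<le> 2"
  using dist_le_walk[of E p q 2] by (auto simp: numeral_2_eq_2 intro: walk.intros)

locale connected_simple_graph =
  fixes V :: "'a set" and E :: "'a \<Rightarrow> 'a \<Rightarrow> bool"
  assumes connected: "connected_graph V E"
begin

lemma finite_V: "finite V"
  using connected by (simp add: connected_graph_def graph_def)

lemma adj_sym: "E u w \<Longrightarrow> E w u"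
  and adj_in_V: "E u w \<Longrightarrow> u \<in> V" "E u w \<Longrightarrow> w \<in> V"
  and adj_neq: "E u w \<Longrightarrow> u \<noteq> w"
  using connected by (auto simp: connected_graph_def graph_def)

lemma nbhd_eq: "nbhd V E w = {u\<in>V. E u w}"
  unfolding nbhd_def using adj_sym by auto

lemma finite_sphere: "finite (sphere V E u i)"
  using finite_V by (simp add: sphere_def)

lemma walk_dist: "u \<in> V \<Longrightarrow> w \<in> V \<Longrightarrow> walk E u w (dist E u w)"
  using connected unfolding connected_graph_def dist_def by (metis LeastI_ex)

lemma dist_eq_0_iff: "u \<in> V \<Longrightarrow> w \<in> V \<Longrightarrow> dist E u w = 0 \<longleftrightarrow> u = w"
  using walk_dist[of u w] dist_le_walk[OF walk_nil, of E u] by (auto simp: walk_0_iff)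

lemma dist_eq_1_iff: "u \<in> V \<Longrightarrow> w \<in> V \<Longrightarrow> dist E u w = 1 \<longleftrightarrow> E u w"
proof
  assume "u \<in> V" "w \<in> V" "dist E u w = 1"
  then show "E u w" using walk_dist[of u w] by (simp add: walk_1_iff)
next
  assume "u \<in> V" "w \<in> V" "E u w"
  then have "dist E u w \<le> 1" "dist E u w \<noteq> 0"
    using dist_le_walk[of E u w 1] walk_1_iff[of E u w] dist_eq_0_iff adj_neq by auto
  then show "dist E u w = 1" by simp
qed

lemma sphere_0:
  assumes "u \<in> V"
  shows "sphere V E u 0 = {u}"
proof -
  have "dist E u u = 0" using dist_eq_0_iff[OF assms assms] by simp
  then show ?thesis using dist_eq_0_iff[OF assms] assms by (auto simp: sphere_def)
qed

lemma dist_Suc_predecessor: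
  assumes "u \<in> V" "w \<in> V" "dist E u w = Suc n"
  shows "\<exists>y. E y w \<and> dist E u y = n"
proof -
  have "walk E u w (Suc n)" using walk_dist[OF assms(1,2)] assms(3) by simp
  from walk_Suc_last[OF this] obtain y where y: "walk E u y n" "E y w" by blast
  have "walk E u w (Suc (dist E u y))"
    using walk_snoc[OF walk_dist[OF assms(1) adj_in_V(1)[OF y(2)]] y(2)] .
  then have "n \<le> dist E u y" using dist_le_walk assms(3) by fastforce
  with dist_le_walk[OF y(1)] y(2) show ?thesis by (intro exI[of _ y]) simp
qed

lemma sphere_nonempty_below:
  assumes u: "u \<in> V" and "sphere V E u n \<noteq> {}" "i \<le> n"
  shows "sphere V E u i \<noteq> {}"
  using assms(2,3)
proof (induction n)
  case (Suc n)
  show ?case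
  proof (cases "i = Suc n")
    case False
    from Suc.prems(1) obtain w where w: "w \<in> V" "dist E u w = Suc n"
      unfolding sphere_def by blast
    obtain y where "E y w" "dist E u y = n" using dist_Suc_predecessor[OF u w] by blast
    then have "y \<in> sphere V E u n" using adj_in_V by (simp add: sphere_def)
    with Suc.IH False Suc.prems(2) show ?thesis by auto
  qed (use Suc.prems in simp)
qed simp

lemma dist_le_ecc: "w \<in> V \<Longrightarrow> dist E u w \<le> ecc V E u"
  unfolding ecc_def using finite_V by simp

lemma sphere_nonempty_le_ecc:
  assumes "u \<in> V" "i \<le> ecc V E u"
  shows "sphere V E u i \<noteq> {}"
proof -
  have "ecc V E u \<in> dist E u ` V"
    unfolding ecc_def using finite_V assms(1) by (intro Max_in) auto
  then have "sphere V E u (ecc V E u) \<noteq> {}" by (auto simp: sphere_def)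
  then show ?thesis using sphere_nonempty_below assms by blast
qed

end

subsection \<open>Distance-semiregular graphs\<close>

locale distance_semiregular_graph =
  fixes V :: "'a set" and E :: "'a \<Rightarrow> 'a \<Rightarrow> bool" and Y Y' :: "'a set" and b c :: "nat \<Rightarrow> nat"
  assumes dsr: "distance_semiregular V E Y Y' b c"

sublocale distance_semiregular_graph \<subseteq> connected_simple_graph V E
  using dsr by unfold_locales (simp add: distance_semiregular_def)

context distance_semiregular_graph
begin

lemma bipartite: "bipartite V E Y Y'"
  using dsr by (simp add: distance_semiregular_def)

lemma V_eq: "V = Y \<union> Y'" and Y_Y'_disjoint: "Y \<inter> Y' = {}"
  using bipartite by (auto simp: bipartite_def)

lemma in_Y_iff_even_dist: "x \<in> Y \<Longrightarrow> w \<in> V \<Longrightarrow> w \<in> Y \<longleftrightarrow> even (dist E x w)"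
  using walk_bipartite_parity[OF bipartite walk_dist] V_eq by blast

lemma b_num_sphere: "x \<in> Y \<Longrightarrow> w \<in> sphere V E x i \<Longrightarrow> b_num V E i x w = b i"
  and c_num_sphere: "x \<in> Y \<Longrightarrow> w \<in> sphere V E x i \<Longrightarrow> c_num V E i x w = c i"
  using dsr dist_le_ecc unfolding distance_semiregular_def sphere_def by auto

lemma adj_Y_imp_Y': "p \<in> Y \<Longrightarrow> E p B \<Longrightarrow> B \<in> Y'"
  and adj_Y'_imp_Y: "B \<in> Y' \<Longrightarrow> E p B \<Longrightarrow> p \<in> Y"
  using bipartite Y_Y'_disjoint unfolding bipartite_def by blast+

lemma nbhd_block: "B \<in> Y' \<Longrightarrow> nbhd V E B = {p \<in> Y. E p B}"
  unfolding nbhd_eq using adj_Y'_imp_Y V_eq by blast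

lemma sphere_1_eq: "p \<in> Y \<Longrightarrow> sphere V E p 1 = {B \<in> Y'. E p B}"
  using dist_eq_1_iff adj_Y_imp_Y' adj_in_V V_eq by (auto simp: sphere_def)

lemma card_sphere_1:
  assumes p: "p \<in> Y"
  shows "card (sphere V E p 1) = b 0"
proof -
  have pV: "p \<in> V" using p V_eq by blast
  have "sphere V E p 1 \<inter> nbhd V E p = sphere V E p 1"
    using dist_eq_1_iff[OF pV] by (auto simp: sphere_def nbhd_def)
  then show ?thesis using b_num_sphere[OF p, of p 0] sphere_0[OF pV] by (simp add: b_num_def)
qed

lemma card_sphere_Suc:
  assumes x: "x \<in> Y" and i: "Suc i \<le> ecc V E x"
  shows "card (sphere V E x (Suc i)) * c (Suc i) = card (sphere V E x i) * b i"
proof (rule card_mult_eq_by_double_counting[OF finite_sphere finite_sphere])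
  have "{u \<in> sphere V E x i. E w u} = sphere V E x i \<inter> nbhd V E w" for w
    by (auto simp: sphere_def nbhd_def)
  then show "\<forall>w\<in>sphere V E x (Suc i). card {u \<in> sphere V E x i. E w u} = c (Suc i)"
    using c_num_sphere[OF x, of _ "Suc i"] by (simp add: c_num_def)
  have "{w \<in> sphere V E x (Suc i). E w u} = sphere V E x (Suc i) \<inter> nbhd V E u" for u
    by (auto simp: sphere_def nbhd_eq)
  then show "\<forall>u\<in>sphere V E x i. card {w \<in> sphere V E x (Suc i). E w u} = b i"
    using b_num_sphere[OF x, of _ i] by (simp add: b_num_def)
qed

lemma c_pos:
  assumes x: "x \<in> Y" and i: "Suc i \<le> ecc V E x"
  shows "0 < c (Suc i)"
proof -
  have xV: "x \<in> V" using x V_eq by blast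
  obtain w where w: "w \<in> sphere V E x (Suc i)" using sphere_nonempty_le_ecc[OF xV i] by blast
  then obtain y where "E y w" "dist E x y = i"
    using dist_Suc_predecessor[OF xV] by (auto simp: sphere_def)
  then have "y \<in> sphere V E x i \<inter> nbhd V E w"
    using adj_in_V by (auto simp: sphere_def nbhd_eq)
  then have "0 < card (sphere V E x i \<inter> nbhd V E w)"
    using finite_sphere by (auto simp: card_gt_0_iff)
  with c_num_sphere[OF x w] show ?thesis by (simp add: c_num_def)
qed

lemma lam_eq_c2_if_dist_2:
  assumes "p \<in> Y" "q \<in> V" "dist E p q = 2"
  shows "lam Y' E p q = c 2"
proof -
  have "{B \<in> Y'. E p B \<and> E q B} = sphere V E p 1 \<inter> nbhd V E q"
    using sphere_1_eq[OF assms(1)] by (auto simp: nbhd_def sphere_def)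
  then show ?thesis
    using c_num_sphere[OF assms(1), of q 2] assms by (simp add: lam_def c_num_def sphere_def)
qed

lemma lam_eq_0_if_dist_gt_2:
  assumes "2 < dist E p q"
  shows "lam Y' E p q = 0"
proof -
  have "\<not> (E p B \<and> E q B)" for B
    using dist_le_2_if_common_neighbour[of E p B q] adj_sym[of q B] assms by auto
  then have "{B \<in> Y'. E p B \<and> E q B} = {}" by blast
  then show ?thesis unfolding lam_def by (simp only: card.empty)
qed

end

subsection \<open>Eccentricity four\<close>

locale distance_semiregular_ecc4 = distance_semiregular_graph +
  assumes ecc_eq_4: "\<forall>x\<in>Y. ecc V E x = 4"
begin

lemma dist_cases_Y:
  assumes "x \<in> Y" "w \<in> Y"
  shows "dist E x w \<in> {0, 2, 4}"
proof -
  have wV: "w \<in> V" using assms V_eq by blast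
  have "even (dist E x w)" using in_Y_iff_even_dist[OF assms(1) wV] assms(2) by simp
  moreover have "dist E x w \<le> 4" using dist_le_ecc[OF wV, of x] ecc_eq_4 assms(1) by simp
  ultimately show ?thesis by (rule even_le_4_cases)
qed

lemma dist_cases_Y':
  assumes "x \<in> Y" "w \<in> Y'"
  shows "dist E x w \<in> {1, 3}"
proof -
  have wV: "w \<in> V" and "w \<notin> Y" using assms V_eq Y_Y'_disjoint by blast+
  then have "odd (dist E x w)" using in_Y_iff_even_dist[OF assms(1) wV] by simp
  moreover have "dist E x w \<le> 4" using dist_le_ecc[OF wV, of x] ecc_eq_4 assms(1) by simp
  ultimately show ?thesis by (rule odd_le_4_cases)
qed

lemma card_Y_card_Y':
  assumes x: "x \<in> Y"
  shows "real (card Y) = 1 + real (b 0 * b 1) / real (c 2)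
           + real (b 0 * b 1 * b 2 * b 3) / real (c 2 * c 3 * c 4)"
    and "real (card Y') = real (b 0) + real (b 0 * b 1 * b 2) / real (c 2 * c 3)"
proof -
  let ?S = "sphere V E x"
  have xV: "x \<in> V" using x V_eq by blast
  have card_Un_spheres: "card (\<Union>i\<in>I. ?S i) = (\<Sum>i\<in>I. card (?S i))" if "finite I" for I
    using that finite_sphere by (intro card_UN_disjoint) (auto simp: sphere_def)
  have "Y = (\<Union>i\<in>{0, 2, 4}. ?S i)"
  proof (intro equalityI subsetI)
    show "w \<in> (\<Union>i\<in>{0, 2, 4}. ?S i)" if "w \<in> Y" for w
      using that dist_cases_Y[OF x] V_eq by (auto simp: sphere_def)
    show "w \<in> Y" if "w \<in> (\<Union>i\<in>{0, 2, 4}. ?S i)" for w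
      using that in_Y_iff_even_dist[OF x] by (auto simp: sphere_def)
  qed
  then have Y: "card Y = 1 + card (?S 2) + card (?S 4)"
    using card_Un_spheres[of "{0, 2, 4}"] sphere_0[OF xV] by simp
  have "Y' = (\<Union>i\<in>{1, 3}. ?S i)"
  proof (intro equalityI subsetI)
    show "w \<in> (\<Union>i\<in>{1, 3}. ?S i)" if "w \<in> Y'" for w
      using that dist_cases_Y'[OF x] V_eq by (auto simp: sphere_def)
    show "w \<in> Y'" if "w \<in> (\<Union>i\<in>{1, 3}. ?S i)" for w
    proof -
      have "w \<in> V" "odd (dist E x w)" using that by (auto simp: sphere_def)
      then show ?thesis using in_Y_iff_even_dist[OF x] V_eq by blast
    qed
  qed
  then have Y': "card Y' = b 0 + card (?S 3)"
    using card_Un_spheres[of "{1, 3}"] card_sphere_1[OF x] by simp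
  have step: "real (card (?S (Suc i))) = real (card (?S i)) * real (b i) / real (c (Suc i))"
    if "Suc i \<le> 4" for i
    using card_sphere_Suc[OF x, of i] c_pos[OF x, of i] that ecc_eq_4 x
    by (simp add: field_simps flip: of_nat_mult)
  have S2: "real (card (?S 2)) = real (b 0 * b 1) / real (c 2)"
    using step[of 1] card_sphere_1[OF x] by (simp add: numeral_2_eq_2)
  have S3: "real (card (?S 3)) = real (b 0 * b 1 * b 2) / real (c 2 * c 3)"
    using step[of 2] S2 by (simp add: numeral_3_eq_3)
  have S4: "real (card (?S 4)) = real (b 0 * b 1 * b 2 * b 3) / real (c 2 * c 3 * c 4)"
    using step[of 3] S3 by (simp add: eval_nat_numeral)
  show "real (card Y) = 1 + real (b 0 * b 1) / real (c 2)
          + real (b 0 * b 1 * b 2 * b 3) / real (c 2 * c 3 * c 4)"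
    using Y S2 S4 by simp
  show "real (card Y') = real (b 0) + real (b 0 * b 1 * b 2) / real (c 2 * c 3)"
    using Y' S3 by simp
qed

lemma dist_eq_2_or_4:
  assumes "p \<in> Y" "q \<in> Y" "p \<noteq> q"
  shows "dist E p q = 2 \<or> dist E p q = 4"
proof -
  have "dist E p q \<noteq> 0" using dist_eq_0_iff[of p q] assms V_eq by blast
  then show ?thesis using dist_cases_Y[OF assms(1,2)] by auto
qed

lemma lam_eq_c2_iff:
  assumes p: "p \<in> Y" and q: "q \<in> Y" and "p \<noteq> q"
  shows "lam Y' E p q = c 2 \<longleftrightarrow> dist E p q = 2"
proof -
  have qV: "q \<in> V" using q V_eq by blast
  from dist_eq_2_or_4[OF assms] show ?thesis
  proof (elim disjE)
    assume "dist E p q = 4"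
    then have "lam Y' E p q = 0" using lam_eq_0_if_dist_gt_2 by simp
    moreover have "0 < c 2" using c_pos[OF p, of 1] ecc_eq_4 p by (simp add: numeral_2_eq_2)
    ultimately show ?thesis using \<open>dist E p q = 4\<close> by simp
  qed (use lam_eq_c2_if_dist_2[OF p qV] in simp)
qed

lemma sphere_2_inter_block:
  assumes p: "p \<in> Y"
  shows "sphere V E p 2 \<inter> nbhd V E B = {q \<in> Y. q \<noteq> p \<and> E q B \<and> lam Y' E p q = c 2}"
proof -
  have dist_2_iff: "dist E p q = 2 \<longleftrightarrow> q \<in> Y \<and> q \<noteq> p \<and> lam Y' E p q = c 2"
    if qV: "q \<in> V" for q
  proof
    assume d: "dist E p q = 2"
    then have "q \<in> Y" "q \<noteq> p"
      using in_Y_iff_even_dist[OF p qV] dist_eq_0_iff[OF _ qV, of p] p V_eq by auto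
    with d show "q \<in> Y \<and> q \<noteq> p \<and> lam Y' E p q = c 2" using lam_eq_c2_iff[OF p] by blast
  qed (use lam_eq_c2_iff[OF p] in blast)
  show ?thesis
  proof (intro set_eqI)
    fix q
    have "q \<in> sphere V E p 2 \<inter> nbhd V E B \<longleftrightarrow> q \<in> V \<and> dist E p q = 2 \<and> E q B"
      by (auto simp: sphere_def nbhd_eq)
    also have "\<dots> \<longleftrightarrow> q \<in> {q \<in> Y. q \<noteq> p \<and> E q B \<and> lam Y' E p q = c 2}"
      using dist_2_iff V_eq by blast
    finally show "q \<in> sphere V E p 2 \<inter> nbhd V E B
      \<longleftrightarrow> q \<in> {q \<in> Y. q \<noteq> p \<and> E q B \<and> lam Y' E p q = c 2}" .
  qed
qed

lemma is_SPBIBD: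
  assumes "\<forall>B\<in>Y'. card (nbhd V E B) = k"
  shows "SPBIBD Y Y' E (card Y) (card Y') (b 0) k (c 2) 0 (b 1) (c 3)"
  unfolding SPBIBD_def design_def
proof (intro conjI ballI impI refl)
  show "finite Y" "finite Y'" using finite_V V_eq by auto
next
  fix B assume "B \<in> Y'"
  then show "card {p \<in> Y. E p B} = k" using assms nbhd_block by simp
next
  fix p assume "p \<in> Y"
  then show "card {B \<in> Y'. E p B} = b 0" using card_sphere_1 sphere_1_eq by simp
next
  fix p q assume "p \<in> Y" "q \<in> Y" "p \<noteq> q"
  then show "lam Y' E p q = c 2 \<or> lam Y' E p q = 0"
    using lam_eq_c2_iff[of p q] lam_eq_0_if_dist_gt_2[of p q] dist_eq_2_or_4[of p q] by auto
next
  fix p B assume p: "p \<in> Y" and B: "B \<in> Y'" and "E p B"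
  then have "b_num V E 1 p B = b 1" using b_num_sphere[OF p] sphere_1_eq by simp
  then show "card {q \<in> Y. q \<noteq> p \<and> E q B \<and> lam Y' E p q = c 2} = b 1"
    using sphere_2_inter_block[OF p, of B] by (simp add: b_num_def numeral_2_eq_2)
next
  fix p B assume p: "p \<in> Y" and B: "B \<in> Y'" and "\<not> E p B"
  then have "B \<in> sphere V E p 3"
    using dist_cases_Y'[OF p B] dist_eq_1_iff[of p B] V_eq by (auto simp: sphere_def)
  then have "c_num V E 3 p B = c 3" by (rule c_num_sphere[OF p])
  moreover have "{q \<in> Y. E q B \<and> lam Y' E p q = c 2} = sphere V E p 2 \<inter> nbhd V E B"
    using sphere_2_inter_block[OF p, of B] \<open>\<not> E p B\<close> by auto
  ultimately show "card {q \<in> Y. E q B \<and> lam Y' E p q = c 2} = c 3"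
    by (simp add: c_num_def numeral_3_eq_3 numeral_2_eq_2)
qed

end

theorem lemma5p1:
  fixes V Y Y' :: "'a set" and E :: "'a \<Rightarrow> 'a \<Rightarrow> bool" and b c :: "nat \<Rightarrow> nat"
    and b'0 :: nat
  assumes dsr: "distance_semiregular V E Y Y' b c"
    and Yne: "Y \<noteq> {}"
    and ecc4: "\<forall>x\<in>Y. ecc V E x = 4"
    and val': "\<forall>y\<in>Y'. card (nbhd V E y) = b'0"
  shows "\<exists>v bb. real v = 1 + real (b 0 * b 1) / real (c 2)
                  + real (b 0 * b 1 * b 2 * b 3) / real (c 2 * c 3 * c 4)
          \<and> real bb = real (b 0) + real (b 0 * b 1 * b 2) / real (c 2 * c 3)
          \<and> SPBIBD Y Y' E v bb (b 0) b'0 (c 2) 0 (b 1) (c 3)"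
proof -
  interpret distance_semiregular_ecc4 V E Y Y' b c
    using dsr ecc4 by unfold_locales
  obtain x where "x \<in> Y" using Yne by blast
  then show ?thesis using card_Y_card_Y' is_SPBIBD[OF val'] by blast
qed

end
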